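(* Every algebra in the class $\mathcal A$ has a distributive congruence lattice (i.e. $\mathcal A$ is congruence distributive). The variety $\mathcal W$ is arithmetical (congruence permutable and congruence distributive) and congruence regular (for every $\mathbf B\in\mathcal W$, every element $a$ of $\mathbf B$ and all congruences $\Theta,\Phi$ of $\mathbf B$, $[a]\Theta=[a]\Phi$ implies $\Theta=\Phi$).
   Context: A bounded directoid with unary operation is an algebra $(P,\sqcup,{}',0,1)$ of type $(2,1,0,0)$ satisfying $x\sqcup x=x$, $x\sqcup y=y\sqcup x$, $x\sqcup((x\sqcup y)\sqcup z)=(x\sqcup y)\sqcup z$, $x\sqcup 0=x$, $x\sqcup 1=1$. Its induced order is $x\leq y$ iff $x\sqcup y=y$. Put $x\sqcap y:=(x'\sqcup y')'$. Conditions: (i) for all $x,y,z$: if $(x\sqcup z)\sqcup(((x'\sqcap w)\sqcap((x\sqcup y)\sqcap w))\sqcup z)=z$ for all $w\in P$, then $(x\sqcup y)\sqcup z=z$; (ii) $(x\sqcap y)\sqcup x\approx x$; (iii) $(x\sqcup y)\sqcup(x'\sqcup y)\approx 1$; (iv) $x''\approx x$; (i') $x\sqcup y\leq(x\sqcup z)\sqcup((x'\sqcap(x\sqcup y))\sqcup z)$ (as an identity, via the induced order). $\mathcal A$ is the class of bounded directoids with unary operation satisfying (i)–(iv) (equivalently, the directoids assigned to generalized orthomodular posets); $\mathcal W$ is the variety of bounded directoids with unary operation satisfying (ii), (iii), (iv) and (i'). *)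

theory Defs
  imports Main
begin

text \<open>An algebra (P, join, cmp, zero, one) of type (2,1,0,0) is represented by a
 carrier type 'a (the whole type) together with its operations.\<close>

definition bdir :: "('a \<Rightarrow> 'a \<Rightarrow> 'a) \<Rightarrow> ('a \<Rightarrow> 'a) \<Rightarrow> 'a \<Rightarrow> 'a \<Rightarrow> bool" where
  "bdir j c z u \<longleftrightarrow>
     (\<forall>x. j x x = x) \<and> (\<forall>x y. j x y = j y x) \<and>
     (\<forall>x y w. j x (j (j x y) w) = j (j x y) w) \<and>
     (\<forall>x. j x z = x) \<and> (\<forall>x. j x u = u)"

definition dmeet :: "('a \<Rightarrow> 'a \<Rightarrow> 'a) \<Rightarrow> ('a \<Rightarrow> 'a) \<Rightarrow> 'a \<Rightarrow> 'a \<Rightarrow> 'a" where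
  "dmeet j c x y = c (j (c x) (c y))"

definition dleq :: "('a \<Rightarrow> 'a \<Rightarrow> 'a) \<Rightarrow> 'a \<Rightarrow> 'a \<Rightarrow> bool" where
  "dleq j x y \<longleftrightarrow> j x y = y"

definition cond_i :: "('a \<Rightarrow> 'a \<Rightarrow> 'a) \<Rightarrow> ('a \<Rightarrow> 'a) \<Rightarrow> bool" where
  "cond_i j c \<longleftrightarrow> (\<forall>x y z.
     (\<forall>w. j (j x z) (j (dmeet j c (dmeet j c (c x) w) (dmeet j c (j x y) w)) z) = z)
     \<longrightarrow> j (j x y) z = z)"

definition cond_ii :: "('a \<Rightarrow> 'a \<Rightarrow> 'a) \<Rightarrow> ('a \<Rightarrow> 'a) \<Rightarrow> bool" where
  "cond_ii j c \<longleftrightarrow> (\<forall>x y. j (dmeet j c x y) x = x)"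

definition cond_iii :: "('a \<Rightarrow> 'a \<Rightarrow> 'a) \<Rightarrow> ('a \<Rightarrow> 'a) \<Rightarrow> 'a \<Rightarrow> bool" where
  "cond_iii j c u \<longleftrightarrow> (\<forall>x y. j (j x y) (j (c x) y) = u)"

definition cond_iv :: "('a \<Rightarrow> 'a) \<Rightarrow> bool" where
  "cond_iv c \<longleftrightarrow> (\<forall>x. c (c x) = x)"

definition cond_i' :: "('a \<Rightarrow> 'a \<Rightarrow> 'a) \<Rightarrow> ('a \<Rightarrow> 'a) \<Rightarrow> bool" where
  "cond_i' j c \<longleftrightarrow> (\<forall>x y z.
     dleq j (j x y) (j (j x z) (j (dmeet j c (c x) (j x y)) z)))"

definition in_A :: "('a \<Rightarrow> 'a \<Rightarrow> 'a) \<Rightarrow> ('a \<Rightarrow> 'a) \<Rightarrow> 'a \<Rightarrow> 'a \<Rightarrow> bool" where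
  "in_A j c z u \<longleftrightarrow> bdir j c z u \<and> cond_i j c \<and> cond_ii j c \<and> cond_iii j c u \<and> cond_iv c"

definition in_W :: "('a \<Rightarrow> 'a \<Rightarrow> 'a) \<Rightarrow> ('a \<Rightarrow> 'a) \<Rightarrow> 'a \<Rightarrow> 'a \<Rightarrow> bool" where
  "in_W j c z u \<longleftrightarrow> bdir j c z u \<and> cond_ii j c \<and> cond_iii j c u \<and> cond_iv c \<and> cond_i' j c"

text \<open>Congruences of an algebra of type (2,1,0,0) (nullary operations are trivially compatible).\<close>

definition is_con :: "('a \<Rightarrow> 'a \<Rightarrow> 'a) \<Rightarrow> ('a \<Rightarrow> 'a) \<Rightarrow> 'a rel \<Rightarrow> bool" where
  "is_con j c R \<longleftrightarrow> equiv UNIV R \<and>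
     (\<forall>a a' b b'. (a, a') \<in> R \<longrightarrow> (b, b') \<in> R \<longrightarrow> (j a b, j a' b') \<in> R) \<and>
     (\<forall>a a'. (a, a') \<in> R \<longrightarrow> (c a, c a') \<in> R)"

definition con_join :: "('a \<Rightarrow> 'a \<Rightarrow> 'a) \<Rightarrow> ('a \<Rightarrow> 'a) \<Rightarrow> 'a rel \<Rightarrow> 'a rel \<Rightarrow> 'a rel" where
  "con_join j c R S = \<Inter>{T. is_con j c T \<and> R \<union> S \<subseteq> T}"

definition con_distributive :: "('a \<Rightarrow> 'a \<Rightarrow> 'a) \<Rightarrow> ('a \<Rightarrow> 'a) \<Rightarrow> bool" where
  "con_distributive j c \<longleftrightarrow> (\<forall>R S T. is_con j c R \<longrightarrow> is_con j c S \<longrightarrow> is_con j c T \<longrightarrow>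
     R \<inter> con_join j c S T = con_join j c (R \<inter> S) (R \<inter> T))"

definition con_permutable :: "('a \<Rightarrow> 'a \<Rightarrow> 'a) \<Rightarrow> ('a \<Rightarrow> 'a) \<Rightarrow> bool" where
  "con_permutable j c \<longleftrightarrow> (\<forall>R S. is_con j c R \<longrightarrow> is_con j c S \<longrightarrow> R O S = S O R)"

definition con_regular :: "('a \<Rightarrow> 'a \<Rightarrow> 'a) \<Rightarrow> ('a \<Rightarrow> 'a) \<Rightarrow> bool" where
  "con_regular j c \<longleftrightarrow> (\<forall>a R S. is_con j c R \<longrightarrow> is_con j c S \<longrightarrow> R `` {a} = S `` {a} \<longrightarrow> R = S)"

end

theory Submission
  imports Defs
begin

text \<open>
  Under (ii) and (iv) alone, (x \<sqinter> y) \<squnion> (y \<sqinter> w) \<squnion> (w \<sqinter> x) is a majority term, so every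
  algebra of \<A> (and of \<W>) is congruence distributive.

  In \<W>, condition (i') makes the induced order orthomodular: x \<le> y implies x \<squnion> (y \<sqinter> x') = y.
  With x \<ominus> y = x \<sqinter> (x \<sqinter> y)', the term p(x, y, w) = (x \<sqinter> (y \<ominus> w)') \<squnion> (w \<ominus> y) then satisfies
  p(x, x, y) = y and p(x, y, y) = x, a Maltsev term, whence permutability.
  The same identity p(x, x, y) = y shows that a congruence is determined by its 0-class, because
  x \<ominus> y and y \<ominus> x are congruent to 0 whenever x and y are. Finally any class [a] determines the
  0-class: if d \<equiv> 0 then a \<equiv> a \<squnion> d and a \<equiv> a \<sqinter> d', so d \<equiv> d \<sqinter> a and d \<equiv> d \<sqinter> a' in every
  congruence with the same class of a, and there d \<equiv> (d \<sqinter> a) \<sqinter> (d \<sqinter> a') = 0.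
\<close>

lemma is_conI:
  assumes "\<And>x. (x, x) \<in> R"
    and "\<And>x y. (x, y) \<in> R \<Longrightarrow> (y, x) \<in> R"
    and "\<And>x y w. (x, y) \<in> R \<Longrightarrow> (y, w) \<in> R \<Longrightarrow> (x, w) \<in> R"
    and "\<And>a a' b b'. (a, a') \<in> R \<Longrightarrow> (b, b') \<in> R \<Longrightarrow> (j a b, j a' b') \<in> R"
    and "\<And>a a'. (a, a') \<in> R \<Longrightarrow> (c a, c a') \<in> R"
  shows "is_con j c R"
proof -
  have "equiv UNIV R"
    by (rule equivI) (auto intro: refl_onI symI transI assms(1-3))
  then show ?thesis
    unfolding is_con_def using assms(4,5) by blast
qed

lemma is_con_refl: "is_con j c R \<Longrightarrow> (x, x) \<in> R"
  unfolding is_con_def equiv_def refl_on_def by blast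

lemma is_con_sym: "is_con j c R \<Longrightarrow> (x, y) \<in> R \<Longrightarrow> (y, x) \<in> R"
  unfolding is_con_def equiv_def sym_def by blast

lemma is_con_trans: "is_con j c R \<Longrightarrow> (x, y) \<in> R \<Longrightarrow> (y, w) \<in> R \<Longrightarrow> (x, w) \<in> R"
  unfolding is_con_def equiv_def trans_def by blast

lemma is_con_compat_j: "is_con j c R \<Longrightarrow> (a, a') \<in> R \<Longrightarrow> (b, b') \<in> R \<Longrightarrow> (j a b, j a' b') \<in> R"
  unfolding is_con_def by blast

lemma is_con_compat_c: "is_con j c R \<Longrightarrow> (a, a') \<in> R \<Longrightarrow> (c a, c a') \<in> R"
  unfolding is_con_def by blast

lemma is_con_compat_dmeet:
  assumes R: "is_con j c R" and "(a, a') \<in> R" "(b, b') \<in> R"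
  shows "(dmeet j c a b, dmeet j c a' b') \<in> R"
  unfolding dmeet_def using assms(2,3) by (intro is_con_compat_c[OF R] is_con_compat_j[OF R])

lemma is_con_Inter:
  assumes con: "\<And>T. T \<in> \<T> \<Longrightarrow> is_con j c T"
  shows "is_con j c (\<Inter>\<T>)"
proof (rule is_conI)
  show "(x, x) \<in> \<Inter>\<T>" for x
    using is_con_refl[OF con] by blast
  show "(y, x) \<in> \<Inter>\<T>" if "(x, y) \<in> \<Inter>\<T>" for x y
    using that is_con_sym[OF con] by blast
  show "(x, w) \<in> \<Inter>\<T>" if "(x, y) \<in> \<Inter>\<T>" "(y, w) \<in> \<Inter>\<T>" for x y w
    using that is_con_trans[OF con] by blast
  show "(j a b, j a' b') \<in> \<Inter>\<T>" if "(a, a') \<in> \<Inter>\<T>" "(b, b') \<in> \<Inter>\<T>" for a a' b b'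
    using that is_con_compat_j[OF con] by blast
  show "(c a, c a') \<in> \<Inter>\<T>" if "(a, a') \<in> \<Inter>\<T>" for a a'
    using that is_con_compat_c[OF con] by blast
qed

lemma is_con_Int: "is_con j c R \<Longrightarrow> is_con j c S \<Longrightarrow> is_con j c (R \<inter> S)"
  using is_con_Inter[of "{R, S}" j c] by auto

lemma is_con_con_join: "is_con j c (con_join j c R S)"
  unfolding con_join_def by (rule is_con_Inter) blast

lemma con_join_upper: "R \<union> S \<subseteq> con_join j c R S"
  unfolding con_join_def by blast

lemma con_join_least: "is_con j c T \<Longrightarrow> R \<union> S \<subseteq> T \<Longrightarrow> con_join j c R S \<subseteq> T"
  unfolding con_join_def by blast

lemma trancl_image:
  assumes "(x, y) \<in> r\<^sup>+" and "\<And>a b. (a, b) \<in> r \<Longrightarrow> (f a, f b) \<in> s"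
  shows "(f x, f y) \<in> s\<^sup>+"
  using assms(1) by induction (auto intro: trancl_into_trancl assms(2))

lemma trancl_subset_con:
  assumes "is_con j c T" and "r \<subseteq> T"
  shows "r\<^sup>+ \<subseteq> T"
proof -
  have "trans T" using is_con_trans[OF assms(1)] by (blast intro: transI)
  then show ?thesis using trancl_mono[OF _ assms(2)] trancl_id by blast
qed

lemma con_join_Int_subset:
  assumes "is_con j c R"
  shows "con_join j c (R \<inter> S) (R \<inter> T) \<subseteq> R \<inter> con_join j c S T"
  using con_join_upper[of S T j c]
  by (intro con_join_least is_con_Int assms is_con_con_join) blast

lemma is_con_trancl_Un:
  assumes S: "is_con j c S" and T: "is_con j c T"
  shows "is_con j c ((S \<union> T)\<^sup>+)"
proof (rule is_conI)
  have compat: "(f x, f y) \<in> (S \<union> T)\<^sup>+"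
    if "(x, y) \<in> (S \<union> T)\<^sup>+" and "\<And>R a b. is_con j c R \<Longrightarrow> (a, b) \<in> R \<Longrightarrow> (f a, f b) \<in> R"
    for f x y
    by (rule trancl_image[OF that(1)]) (use that(2)[OF S] that(2)[OF T] in blast)
  show "(x, x) \<in> (S \<union> T)\<^sup>+" for x
    using is_con_refl[OF S] by blast
  show "(y, x) \<in> (S \<union> T)\<^sup>+" if "(x, y) \<in> (S \<union> T)\<^sup>+" for x y
  proof -
    have "sym (S \<union> T)" using is_con_sym[OF S] is_con_sym[OF T] by (blast intro: symI)
    then show ?thesis using symD[OF sym_trancl that] by blast
  qed
  show "(x, w) \<in> (S \<union> T)\<^sup>+" if "(x, y) \<in> (S \<union> T)\<^sup>+" "(y, w) \<in> (S \<union> T)\<^sup>+" for x y w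
    using that by (rule trancl_trans)
  show "(j a b, j a' b') \<in> (S \<union> T)\<^sup>+"
    if "(a, a') \<in> (S \<union> T)\<^sup>+" "(b, b') \<in> (S \<union> T)\<^sup>+" for a a' b b'
  proof -
    have "(j a b, j a' b) \<in> (S \<union> T)\<^sup>+"
      by (rule compat[OF that(1)]) (metis is_con_compat_j is_con_refl)
    also have "(j a' b, j a' b') \<in> (S \<union> T)\<^sup>+"
      by (rule compat[OF that(2)]) (metis is_con_compat_j is_con_refl)
    finally show ?thesis .
  qed
  show "(c a, c a') \<in> (S \<union> T)\<^sup>+" if "(a, a') \<in> (S \<union> T)\<^sup>+" for a a'
    by (rule compat[OF that]) (rule is_con_compat_c)
qed

lemma con_join_subset_trancl_Un: "is_con j c S \<Longrightarrow> is_con j c T \<Longrightarrow> con_join j c S T \<subseteq> (S \<union> T)\<^sup>+"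
  by (intro con_join_least is_con_trancl_Un) auto

text \<open>A path from a to b through S and T, pushed through M a _ b, stays in the R-class
  of a = M a y a.\<close>
lemma con_distributive_if_majority_term:
  fixes M :: "'a \<Rightarrow> 'a \<Rightarrow> 'a \<Rightarrow> 'a"
  assumes M_left: "\<And>x y. M x x y = x" and M_outer: "\<And>x y. M x y x = x" and M_right: "\<And>x y. M y x x = x"
    and M_compat: "\<And>R a a' x x' b b'. is_con j c R \<Longrightarrow> (a, a') \<in> R \<Longrightarrow> (x, x') \<in> R \<Longrightarrow> (b, b') \<in> R
      \<Longrightarrow> (M a x b, M a' x' b') \<in> R"
  shows "con_distributive j c"
  unfolding con_distributive_def
proof (intro allI impI subset_antisym)
  fix R S T assume R: "is_con j c R" and S: "is_con j c S" and T: "is_con j c T"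
  let ?J = "con_join j c (R \<inter> S) (R \<inter> T)"
  show "R \<inter> con_join j c S T \<subseteq> ?J"
  proof (clarify)
    fix a b assume ab: "(a, b) \<in> R" "(a, b) \<in> con_join j c S T"
    have a_R: "(a, M a x b) \<in> R" for x
      using M_compat[OF R is_con_refl[OF R, of a] is_con_refl[OF R, of x] ab(1)] by (simp only: M_outer)
    have "(M a x b, M a y b) \<in> R \<inter> S \<union> R \<inter> T" if "(x, y) \<in> S \<union> T" for x y
    proof -
      have "(M a x b, M a y b) \<in> R"
        using is_con_trans[OF R is_con_sym[OF R a_R] a_R] .
      moreover have "(M a x b, M a y b) \<in> S \<union> T"
      proof (cases "(x, y) \<in> S")
        case True
        then show ?thesis using M_compat[OF S is_con_refl[OF S] _ is_con_refl[OF S]] by blast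
      next
        case False
        then have "(x, y) \<in> T" using that by blast
        then show ?thesis using M_compat[OF T is_con_refl[OF T] _ is_con_refl[OF T]] by blast
      qed
      ultimately show ?thesis by blast
    qed
    moreover have "(a, b) \<in> (S \<union> T)\<^sup>+"
      using ab(2) con_join_subset_trancl_Un[OF S T] by blast
    ultimately have "(M a a b, M a b b) \<in> (R \<inter> S \<union> R \<inter> T)\<^sup>+"
      by (rule trancl_image[rotated])
    then have "(a, b) \<in> (R \<inter> S \<union> R \<inter> T)\<^sup>+"
      by (simp only: M_left M_right)
    then show "(a, b) \<in> ?J"
      using trancl_subset_con[OF is_con_con_join con_join_upper] by blast
  qed
  show "?J \<subseteq> R \<inter> con_join j c S T" by (rule con_join_Int_subset[OF R])
qed

lemma con_permutable_if_maltsev_term: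
  fixes p :: "'a \<Rightarrow> 'a \<Rightarrow> 'a \<Rightarrow> 'a"
  assumes p_left: "\<And>x y. p x x y = y" and p_right: "\<And>x y. p x y y = x"
    and p_compat: "\<And>R a a' x x' b b'. is_con j c R \<Longrightarrow> (a, a') \<in> R \<Longrightarrow> (x, x') \<in> R \<Longrightarrow> (b, b') \<in> R
      \<Longrightarrow> (p a x b, p a' x' b') \<in> R"
  shows "con_permutable j c"
proof -
  have "R O S \<subseteq> S O R" if R: "is_con j c R" and S: "is_con j c S" for R S
  proof clarify
    fix x y w assume xy: "(x, y) \<in> R" and yw: "(y, w) \<in> S"
    have "(x, p x y w) \<in> S"
      using p_compat[OF S is_con_refl[OF S, of x] is_con_refl[OF S, of y] yw] by (simp only: p_right)
    moreover have "(p x y w, w) \<in> R"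
      using p_compat[OF R xy is_con_refl[OF R, of y] is_con_refl[OF R, of w]] by (simp only: p_left)
    ultimately show "(x, w) \<in> S O R" by blast
  qed
  then show ?thesis unfolding con_permutable_def by blast
qed

definition majority_term :: "('a \<Rightarrow> 'a \<Rightarrow> 'a) \<Rightarrow> ('a \<Rightarrow> 'a) \<Rightarrow> 'a \<Rightarrow> 'a \<Rightarrow> 'a \<Rightarrow> 'a" where
  "majority_term j c x y w = j (j (dmeet j c x y) (dmeet j c y w)) (dmeet j c w x)"

lemma is_con_compat_majority_term:
  assumes R: "is_con j c R" and "(a, a') \<in> R" "(x, x') \<in> R" "(b, b') \<in> R"
  shows "(majority_term j c a x b, majority_term j c a' x' b') \<in> R"
  unfolding majority_term_def using assms(2-4)
  by (intro is_con_compat_j[OF R] is_con_compat_dmeet[OF R])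

lemma con_distributive_if_dmeet_le:
  assumes idem: "\<And>x. j x x = x" and comm: "\<And>x y. j x y = j y x"
    and meet_le: "\<And>x y. j (dmeet j c x y) x = x" and invol: "\<And>x. c (c x) = x"
  shows "con_distributive j c"
proof (rule con_distributive_if_majority_term[where M = "majority_term j c"])
  have meet_idem: "dmeet j c x x = x" for x
    by (simp add: dmeet_def idem invol)
  have meet_comm: "dmeet j c y x = dmeet j c x y" for x y
    by (simp add: dmeet_def comm)
  have absorb: "j x (dmeet j c x y) = x" for x y
    using meet_le comm by metis
  show "majority_term j c x x y = x" for x y
    unfolding majority_term_def by (simp add: meet_idem meet_comm[of y x] absorb)
  show "majority_term j c x y x = x" for x y
    unfolding majority_term_def by (simp add: meet_idem meet_comm[of y x] idem meet_le)
  show "majority_term j c y x x = x" for x y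
    unfolding majority_term_def by (simp add: meet_idem meet_comm[of y x] meet_le absorb)
qed (rule is_con_compat_majority_term)

definition dminus :: "('a \<Rightarrow> 'a \<Rightarrow> 'a) \<Rightarrow> ('a \<Rightarrow> 'a) \<Rightarrow> 'a \<Rightarrow> 'a \<Rightarrow> 'a" where
  "dminus j c x y = dmeet j c x (c (dmeet j c x y))"

definition maltsev_term :: "('a \<Rightarrow> 'a \<Rightarrow> 'a) \<Rightarrow> ('a \<Rightarrow> 'a) \<Rightarrow> 'a \<Rightarrow> 'a \<Rightarrow> 'a \<Rightarrow> 'a" where
  "maltsev_term j c x y w = j (dmeet j c x (c (dminus j c y w))) (dminus j c w y)"

lemma is_con_compat_dminus:
  assumes R: "is_con j c R" and "(a, a') \<in> R" "(b, b') \<in> R"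
  shows "(dminus j c a b, dminus j c a' b') \<in> R"
  unfolding dminus_def using assms(2,3)
  by (intro is_con_compat_dmeet[OF R] is_con_compat_c[OF R])

lemma is_con_compat_maltsev_term:
  assumes R: "is_con j c R" and "(a, a') \<in> R" "(x, x') \<in> R" "(b, b') \<in> R"
  shows "(maltsev_term j c a x b, maltsev_term j c a' x' b') \<in> R"
  unfolding maltsev_term_def using assms(2-4)
  by (intro is_con_compat_j[OF R] is_con_compat_dmeet[OF R] is_con_compat_c[OF R]
      is_con_compat_dminus[OF R])

locale orthomodular_directoid =
  fixes j :: "'a \<Rightarrow> 'a \<Rightarrow> 'a" (infixl \<open>\<squnion>\<close> 65) and c :: "'a \<Rightarrow> 'a" and z u :: 'a
  assumes join_idem: "x \<squnion> x = x"
    and join_comm: "x \<squnion> y = y \<squnion> x"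
    and join_left_le: "x \<squnion> ((x \<squnion> y) \<squnion> w) = (x \<squnion> y) \<squnion> w"
    and join_zero: "x \<squnion> z = x"
    and join_one: "x \<squnion> u = u"
    and dmeet_le: "dmeet j c x y \<squnion> x = x"
    and join_compl_join: "(x \<squnion> y) \<squnion> (c x \<squnion> y) = u"
    and compl_compl: "c (c x) = x"
    and join_le_orthomodular: "dleq j (x \<squnion> y) ((x \<squnion> w) \<squnion> (dmeet j c (c x) (x \<squnion> y) \<squnion> w))"
begin

abbreviation meet (infixl \<open>\<sqinter>\<close> 70) where "x \<sqinter> y \<equiv> dmeet j c x y"
abbreviation le (infix \<open>\<sqsubseteq>\<close> 50) where "x \<sqsubseteq> y \<equiv> dleq j x y"

lemma le_antisym: "x \<sqsubseteq> y \<Longrightarrow> y \<sqsubseteq> x \<Longrightarrow> x = y"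
  unfolding dleq_def by (metis join_comm)

lemma le_join_if_le: "x \<sqsubseteq> y \<Longrightarrow> x \<sqsubseteq> y \<squnion> w"
  unfolding dleq_def by (metis join_left_le)

lemma le_trans: "x \<sqsubseteq> y \<Longrightarrow> y \<sqsubseteq> w \<Longrightarrow> x \<sqsubseteq> w"
  using le_join_if_le unfolding dleq_def by metis

lemma le_join_left: "x \<sqsubseteq> x \<squnion> y"
  using join_left_le[of x y z] unfolding dleq_def by (simp add: join_zero)

lemma le_join_right: "y \<sqsubseteq> x \<squnion> y"
  using le_join_left join_comm by metis

lemma meet_comm: "x \<sqinter> y = y \<sqinter> x"
  unfolding dmeet_def by (simp add: join_comm)

lemma meet_idem: "x \<sqinter> x = x"
  unfolding dmeet_def by (simp add: join_idem compl_compl)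

lemma meet_le_left: "x \<sqinter> y \<sqsubseteq> x"
  unfolding dleq_def by (rule dmeet_le)

lemma meet_le_right: "x \<sqinter> y \<sqsubseteq> y"
  using meet_le_left meet_comm by metis

lemma compl_join: "c (x \<squnion> y) = c x \<sqinter> c y"
  unfolding dmeet_def by (simp add: compl_compl)

lemma compl_meet: "c (x \<sqinter> y) = c x \<squnion> c y"
  unfolding dmeet_def by (simp add: compl_compl)

lemma compl_antitone: "x \<sqsubseteq> y \<Longrightarrow> c y \<sqsubseteq> c x"
  unfolding dleq_def by (metis compl_join dmeet_le)

lemma meet_join_absorb: "x \<sqinter> (x \<squnion> y) = x"
  using compl_antitone[OF le_join_left, of x y] unfolding dleq_def dmeet_def
  by (simp add: join_comm compl_compl)

lemma join_compl: "x \<squnion> c x = u"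
  using join_compl_join[of x z] by (simp add: join_zero)

lemma compl_zero: "c z = u"
  using join_compl[of z] join_zero[of "c z"] by (simp add: join_comm)

lemma meet_one: "x \<sqinter> u = x"
  unfolding dmeet_def by (simp add: compl_zero[symmetric] compl_compl join_zero)

lemma meet_compl: "x \<sqinter> c x = z"
  unfolding dmeet_def by (metis compl_compl compl_zero join_comm join_compl)

lemma meet_meet_compl: "(x \<sqinter> y) \<sqinter> (x \<sqinter> c y) = z"
  using join_compl_join[of "c y" "c x"]
  unfolding dmeet_def by (metis compl_compl compl_zero join_comm)

lemma eq_one_if_le_and_compl_le: "x \<sqsubseteq> s \<Longrightarrow> c x \<sqsubseteq> s \<Longrightarrow> s = u"
  using join_compl_join[of x s] unfolding dleq_def by (simp add: join_idem)

text \<open>Orthomodularity is where (i') enters: applied with w = 0 it yields y \<sqsubseteq> t for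
  t = x \<squnion> (y \<sqinter> c x); applied with w = y it makes c t \<squnion> y an upper bound of y and c y,
  hence 1, so c y \<sqinter> t = 0; and applied to y \<sqsubseteq> t with w = 0 this gives t \<sqsubseteq> y.\<close>
lemma orthomodular:
  assumes "x \<sqsubseteq> y"
  shows "x \<squnion> (y \<sqinter> c x) = y"
proof -
  let ?t = "x \<squnion> (y \<sqinter> c x)"
  have xy: "x \<squnion> y = y" using assms unfolding dleq_def .
  have y_le_t: "y \<sqsubseteq> ?t"
    using join_le_orthomodular[of x y z] by (simp add: xy join_zero meet_comm[of "c x" y])
  have compl_t: "c ?t = c x \<sqinter> (x \<squnion> c y)"
    by (simp add: compl_join compl_meet compl_compl join_comm[of "c y" x])
  have "x \<squnion> c y \<sqsubseteq> y \<squnion> (c ?t \<squnion> y)"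
    using join_le_orthomodular[of x "c y" y] by (simp add: xy compl_t)
  also have "y \<squnion> (c ?t \<squnion> y) = c ?t \<squnion> y"
    using le_join_right[of y "c ?t"] unfolding dleq_def .
  finally have "c y \<sqsubseteq> c ?t \<squnion> y"
    using le_trans le_join_right by blast
  then have "c ?t \<squnion> y = u"
    using eq_one_if_le_and_compl_le le_join_right by blast
  then have t_meet: "c y \<sqinter> ?t = z"
    unfolding dmeet_def by (simp add: compl_compl join_comm[of y] compl_zero[symmetric])
  have "?t \<sqsubseteq> y \<squnion> (c y \<sqinter> ?t)"
    using join_le_orthomodular[of y ?t z] y_le_t unfolding dleq_def by (simp add: join_zero)
  then have "?t \<sqsubseteq> y"
    by (simp add: t_meet join_zero)
  with y_le_t show ?thesis by (simp add: le_antisym)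
qed

lemma orthomodular_dual:
  assumes "x \<sqsubseteq> y"
  shows "y \<sqinter> c (y \<sqinter> c x) = x"
proof -
  have "c y \<squnion> (c x \<sqinter> y) = c x"
    using orthomodular[OF compl_antitone[OF assms]] by (simp add: compl_compl)
  then have "c (c y \<squnion> (c x \<sqinter> y)) = x"
    by (simp add: compl_compl)
  then show ?thesis
    by (simp add: compl_join compl_compl meet_comm[of "c x" y])
qed

lemma dminus_self: "dminus j c x x = z"
  unfolding dminus_def by (simp add: meet_idem meet_compl)

lemma maltsev_term_left: "maltsev_term j c x x y = y"
proof -
  have "x \<sqinter> c (dminus j c x y) = x \<sqinter> y"
    unfolding dminus_def by (rule orthomodular_dual[OF meet_le_left])
  moreover have "x \<sqinter> y \<squnion> dminus j c y x = y"
    unfolding dminus_def using orthomodular[OF meet_le_right, of x y] by (simp add: meet_comm[of y x])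
  ultimately show ?thesis
    unfolding maltsev_term_def by simp
qed

lemma maltsev_term_right: "maltsev_term j c x y y = x"
  unfolding maltsev_term_def by (simp add: dminus_self compl_zero meet_one join_zero)


lemma zero_class_transfer:
  assumes R: "is_con j c R" and S: "is_con j c S"
    and same_class: "R `` {a} = S `` {a}" and dz: "(d, z) \<in> R"
  shows "(d, z) \<in> S"
proof -
  have R_to_S: "(a, b) \<in> S" if "(a, b) \<in> R" for b
    using that same_class by blast
  have "(a \<squnion> z, a \<squnion> d) \<in> R"
    by (rule is_con_compat_j[OF R is_con_refl[OF R] is_con_sym[OF R dz]])
  then have "(a, d \<squnion> a) \<in> S"
    using R_to_S by (simp add: join_zero join_comm[of a d])
  then have "(d \<sqinter> (d \<squnion> a), d \<sqinter> a) \<in> S"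
    by (rule is_con_compat_dmeet[OF S is_con_refl[OF S] is_con_sym[OF S]])
  then have d_meet_a: "(d, d \<sqinter> a) \<in> S"
    by (simp only: meet_join_absorb)
  have "(a \<sqinter> c z, a \<sqinter> c d) \<in> R"
    by (rule is_con_compat_dmeet[OF R is_con_refl[OF R] is_con_compat_c[OF R is_con_sym[OF R dz]]])
  then have "(a, a \<sqinter> c d) \<in> S"
    using R_to_S by (simp add: compl_zero meet_one)
  then have "(c d \<squnion> (a \<sqinter> c d), c d \<squnion> a) \<in> S"
    by (rule is_con_compat_j[OF S is_con_refl[OF S] is_con_sym[OF S]])
  then have "(c d, c d \<squnion> a) \<in> S"
    using meet_le_right[of a "c d"] unfolding dleq_def by (simp add: join_comm)
  then have "(c (c d), c (c d \<squnion> a)) \<in> S"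
    by (rule is_con_compat_c[OF S])
  then have d_meet_ca: "(d, d \<sqinter> c a) \<in> S"
    by (simp add: compl_compl compl_join)
  have "(d \<sqinter> d, (d \<sqinter> a) \<sqinter> (d \<sqinter> c a)) \<in> S"
    by (rule is_con_compat_dmeet[OF S d_meet_a d_meet_ca])
  then show ?thesis
    by (simp only: meet_idem meet_meet_compl)
qed

lemma con_subset_if_zero_class_subset:
  assumes R: "is_con j c R" and S: "is_con j c S"
    and zero_class: "\<And>d. (d, z) \<in> R \<Longrightarrow> (d, z) \<in> S"
  shows "R \<subseteq> S"
proof clarify
  fix x y assume xy: "(x, y) \<in> R"
  have "(dminus j c x y, dminus j c x x) \<in> R" "(dminus j c y x, dminus j c x x) \<in> R"
    using is_con_compat_dminus[OF R is_con_refl[OF R] is_con_sym[OF R xy]]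
      is_con_compat_dminus[OF R is_con_sym[OF R xy] is_con_refl[OF R]] by blast+
  then have "(dminus j c x y, z) \<in> S" "(dminus j c y x, z) \<in> S"
    using zero_class by (simp_all add: dminus_self)
  then have "(maltsev_term j c x x y, (x \<sqinter> c z) \<squnion> z) \<in> S"
    unfolding maltsev_term_def
    by (intro is_con_compat_j[OF S] is_con_compat_dmeet[OF S] is_con_compat_c[OF S] is_con_refl[OF S])
  then show "(x, y) \<in> S"
    using is_con_sym[OF S] by (simp add: maltsev_term_left compl_zero meet_one join_zero)
qed

lemma congruence_regular: "con_regular j c"
  unfolding con_regular_def
proof (intro allI impI)
  fix a R S assume R: "is_con j c R" and S: "is_con j c S" and same_class: "R `` {a} = S `` {a}"
  show "R = S"
    using con_subset_if_zero_class_subset[OF R S zero_class_transfer[OF R S same_class]]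
      con_subset_if_zero_class_subset[OF S R zero_class_transfer[OF S R same_class[symmetric]]]
    by (rule subset_antisym)
qed

lemma congruence_permutable: "con_permutable j c"
  using maltsev_term_left maltsev_term_right is_con_compat_maltsev_term
  by (rule con_permutable_if_maltsev_term)

lemma congruence_distributive: "con_distributive j c"
  using join_idem join_comm dmeet_le compl_compl by (rule con_distributive_if_dmeet_le)

end

lemma in_W_imp_orthomodular_directoid: "in_W j c z u \<Longrightarrow> orthomodular_directoid j c z u"
  unfolding in_W_def bdir_def cond_ii_def cond_iii_def cond_iv_def cond_i'_def
  by unfold_locales blast+

theorem mainTheorem7:
  shows "(\<forall>(j :: 'a \<Rightarrow> 'a \<Rightarrow> 'a) c z u. in_A j c z u \<longrightarrow> con_distributive j c) \<and>
         (\<forall>(j :: 'b \<Rightarrow> 'b \<Rightarrow> 'b) c z u. in_W j c z u \<longrightarrow>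
            con_permutable j c \<and> con_distributive j c \<and> con_regular j c)"
proof (intro conjI allI impI)
  fix j :: "'a \<Rightarrow> 'a \<Rightarrow> 'a" and c z u
  assume "in_A j c z u"
  then show "con_distributive j c"
    unfolding in_A_def bdir_def cond_ii_def cond_iv_def
    by (intro con_distributive_if_dmeet_le) blast+
next
  fix j :: "'b \<Rightarrow> 'b \<Rightarrow> 'b" and c z u
  assume "in_W j c z u"
  then interpret orthomodular_directoid j c z u
    by (rule in_W_imp_orthomodular_directoid)
  show "con_permutable j c" by (rule congruence_permutable)
  show "con_distributive j c" by (rule congruence_distributive)
  show "con_regular j c" by (rule congruence_regular)
qed

end
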